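(* Let $x=(x_n)$ and $y=(y_n)$ be sequences of real numbers such that $\sum_n x_n$ and $\sum_n y_n$ are absolutely convergent. If every point of $E(x)$ has a unique representation, or every point of $E(y)$ has a unique representation, then $E(x,y)$ is a Cantor set.
   Context: For an absolutely convergent series $\sum_n v_n$ in $\mathbb R^d$, its achievement set is $E(v)=\{\sum_{n=1}^\infty \varepsilon_n v_n : (\varepsilon_n)\in\{0,1\}^{\mathbb N}\}$; $E(x,y)$ denotes the achievement set of the sequence $((x_n,y_n))_n$ in $\mathbb R^2$. A point $a$ of $E(v)$ has a unique representation if there is exactly one set $A\subset\mathbb N$ with $a=\sum_{i\in A}v_i$. A Cantor set is a nonempty, totally disconnected, perfect, compact subset of $\mathbb R^n$. *)

theory Defs
  imports "HOL-Analysis.Analysis"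
begin

text \<open>Achievement set of a series: all subsums \<open>\<Sum>n. \<epsilon>\<^sub>n v\<^sub>n\<close> with \<open>\<epsilon>\<^sub>n \<in> {0,1}\<close>,
  where a 0/1-sequence is encoded by the set A of indices with \<open>\<epsilon>\<^sub>n = 1\<close>.\<close>
definition subsum :: "(nat \<Rightarrow> 'a::real_normed_vector) \<Rightarrow> nat set \<Rightarrow> 'a" where
  "subsum v A = (\<Sum>n. (if n \<in> A then v n else 0))"

definition achievement_set :: "(nat \<Rightarrow> 'a::real_normed_vector) \<Rightarrow> 'a set" where
  "achievement_set v = {subsum v A | A. True}"

definition unique_representation :: "(nat \<Rightarrow> 'a::real_normed_vector) \<Rightarrow> 'a \<Rightarrow> bool" where
  "unique_representation v a \<longleftrightarrow> (\<exists>!A. a = subsum v A)"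

definition totally_disconnected :: "'a::topological_space set \<Rightarrow> bool" where
  "totally_disconnected S \<longleftrightarrow>
     (\<forall>C. C \<subseteq> S \<and> connected C \<longrightarrow> (\<forall>a\<in>C. \<forall>b\<in>C. a = b))"

definition perfect_set :: "'a::topological_space set \<Rightarrow> bool" where
  "perfect_set S \<longleftrightarrow> closed S \<and> (\<forall>x\<in>S. x islimpt S)"

definition cantor_set :: "'a::topological_space set \<Rightarrow> bool" where
  "cantor_set S \<longleftrightarrow> S \<noteq> {} \<and> totally_disconnected S \<and> perfect_set S \<and> compact S"

end

theory Submission
  imports Defs
begin

text \<open>If one coordinate series has only unique representations, then so does the planar series,
  i.e. \<open>A \<mapsto> \<Sum>\<^sub>n\<^sub>\<in>\<^sub>A v\<^sub>n\<close> is injective on index sets. For any absolutely convergent series with this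
  injectivity the achievement set is the continuous image of the Cantor cube \<open>{0,1}\<^sup>\<nat>\<close>, hence
  compact; it is perfect because adding or removing a small nonzero term \<open>v\<^sub>k\<close> moves a point by
  little; and it is totally disconnected because for each index \<open>n\<close> the subsums with and without
  \<open>n\<close> form two disjoint compact sets covering it, which separate any two distinct points.\<close>

lemma summable_subsum_terms:
  fixes v :: "nat \<Rightarrow> 'a::banach"
  assumes "summable (\<lambda>n. norm (v n))"
  shows "summable (\<lambda>n. if n \<in> A then v n else 0)"
  by (rule summable_norm_cancel, rule summable_comparison_test[OF _ assms]) auto

lemma subsum_insert:
  fixes v :: "nat \<Rightarrow> 'a::banach"
  assumes "summable (\<lambda>n. norm (v n))" "k \<notin> A"
  shows "subsum v (insert k A) = subsum v A + v k"
proof -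
  have "(\<lambda>n. if n \<in> insert k A then v n else 0)
      = (\<lambda>n. (if n \<in> A then v n else 0) + (if n = k then v n else 0))"
    using assms(2) by auto
  then show ?thesis
    unfolding subsum_def
    using suminf_add[OF summable_subsum_terms[OF assms(1)] sums_summable[OF sums_single]]
      sums_unique[OF sums_single[of k v]] by simp
qed

lemma subsum_remove:
  fixes v :: "nat \<Rightarrow> 'a::banach"
  assumes "summable (\<lambda>n. norm (v n))" "k \<in> A"
  shows "subsum v A = subsum v (A - {k}) + v k"
  using subsum_insert[OF assms(1), of k "A - {k}"] assms(2) by (simp add: insert_absorb)

lemma subsum_fun_upd_zero: "subsum (v(n := 0)) A = subsum v (A - {n})"
  unfolding subsum_def by (rule arg_cong[where f = suminf]) auto

lemma subsum_bounded_linear: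
  fixes v :: "nat \<Rightarrow> 'a::banach"
  assumes f: "bounded_linear f" and sv: "summable (\<lambda>n. norm (v n))"
  shows "f (subsum v A) = subsum (\<lambda>n. f (v n)) A"
  unfolding subsum_def bounded_linear.suminf[OF f summable_subsum_terms[OF sv]]
  using linear_simps(3)[OF f] by (intro arg_cong[where f = suminf]) auto

lemma inj_subsum_iff_unique_representation:
  "inj (subsum v) \<longleftrightarrow> (\<forall>a\<in>achievement_set v. unique_representation v a)"
  unfolding inj_def achievement_set_def unique_representation_def by blast

lemma inj_subsum_if_inj_subsum_image:
  fixes v :: "nat \<Rightarrow> 'a::banach"
  assumes "bounded_linear f" "summable (\<lambda>n. norm (v n))" "inj (subsum (\<lambda>n. f (v n)))"
  shows "inj (subsum v)"
proof (rule injI)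
  fix A B assume "subsum v A = subsum v B"
  then have "subsum (\<lambda>n. f (v n)) A = subsum (\<lambda>n. f (v n)) B"
    using subsum_bounded_linear[OF assms(1,2)] by metis
  then show "A = B"
    using injD[OF assms(3)] by blast
qed

lemma compact_Cantor_cube: "compact (PiE UNIV (\<lambda>_::nat. {0::real, 1}))"
proof -
  have "compactin (product_topology (\<lambda>_. euclidean) UNIV) (PiE UNIV (\<lambda>_::nat. {0::real, 1}))"
    unfolding compactin_PiE by auto
  then show ?thesis
    by (metis compactin_euclidean_iff euclidean_product_topology)
qed

lemma compact_achievement_set:
  fixes v :: "nat \<Rightarrow> 'a::banach"
  assumes sv: "summable (\<lambda>n. norm (v n))"
  shows "compact (achievement_set v)"
proof -
  define K where "K = PiE UNIV (\<lambda>_::nat. {0::real, 1})"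
  have "compact K"
    unfolding K_def by (rule compact_Cantor_cube)
  define \<phi> where "\<phi> = (\<lambda>f::nat \<Rightarrow> real. \<Sum>n. f n *\<^sub>R v n)"
  have "uniform_limit K (\<lambda>m f. \<Sum>i<m. f i *\<^sub>R v i) \<phi> sequentially"
    unfolding \<phi>_def
  proof (rule Weierstrass_m_test[OF _ sv])
    fix n f assume "f \<in> K"
    then have "f n \<in> {0, 1}" unfolding K_def by auto
    then show "norm (f n *\<^sub>R v n) \<le> norm (v n)" by auto
  qed
  then have "continuous_on K \<phi>"
    by (rule uniform_limit_theorem[rotated])
      (auto intro!: always_eventually continuous_intros
        continuous_on_subset[OF continuous_on_product_coordinates])
  with \<open>compact K\<close> have "compact (\<phi> ` K)"
    by (rule compact_continuous_image[rotated])
  moreover have "\<phi> ` K = achievement_set v"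
  proof -
    have K_eq: "K = (\<lambda>A n. if n \<in> A then 1 else 0) ` UNIV"
    proof (intro equalityI subsetI)
      fix f assume "f \<in> K"
      then have "f = (\<lambda>n. if n \<in> {n. f n = 1} then 1 else 0)"
        by (auto simp: K_def PiE_iff fun_eq_iff)
      then show "f \<in> (\<lambda>A n. if n \<in> A then 1 else 0) ` UNIV" by blast
    qed (auto simp: K_def split: if_splits)
    have "\<phi> (\<lambda>n. if n \<in> A then 1 else 0) = subsum v A" for A
      unfolding \<phi>_def subsum_def by (rule arg_cong[where f = suminf]) auto
    then show ?thesis
      unfolding K_eq achievement_set_def image_image by auto
  qed
  ultimately show ?thesis by simp
qed

lemma islimpt_achievement_set:
  fixes v :: "nat \<Rightarrow> 'a::banach"
  assumes sv: "summable (\<lambda>n. norm (v n))" and nonzero: "\<And>k. v k \<noteq> 0"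
    and "p \<in> achievement_set v"
  shows "p islimpt achievement_set v"
  unfolding islimpt_approachable
proof (intro allI impI)
  fix e :: real assume "e > 0"
  obtain A where A: "p = subsum v A"
    using \<open>p \<in> achievement_set v\<close> unfolding achievement_set_def by blast
  obtain k where k: "norm (v k) < e"
    using summable_LIMSEQ_zero[OF sv] \<open>e > 0\<close> unfolding lim_sequentially by fastforce
  define B where "B = (if k \<in> A then A - {k} else insert k A)"
  have "dist (subsum v B) p = norm (v k)"
    unfolding A B_def
    by (auto simp: dist_norm subsum_insert[OF sv] subsum_remove[OF sv, of k A] norm_minus_commute)
  with k nonzero[of k] show "\<exists>q\<in>achievement_set v. q \<noteq> p \<and> dist q p < e"
    unfolding achievement_set_def by (intro bexI[of _ "subsum v B"]) auto
qed

lemma subsums_without_eq_achievement_set: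
  "{subsum v D | D. n \<notin> D} = achievement_set (v(n := 0))"
  unfolding achievement_set_def subsum_fun_upd_zero
proof (intro equalityI subsetI)
  fix p assume "p \<in> {subsum v D | D. n \<notin> D}"
  then obtain D where "p = subsum v D" "n \<notin> D" by blast
  then have "p = subsum v (D - {n})" by simp
  then show "p \<in> {subsum v (A - {n}) | A. True}" by blast
qed blast

lemma subsums_with_eq_translation:
  fixes v :: "nat \<Rightarrow> 'a::banach"
  assumes sv: "summable (\<lambda>n. norm (v n))"
  shows "{subsum v D | D. n \<in> D} = (+) (v n) ` {subsum v D | D. n \<notin> D}"
proof (intro equalityI subsetI)
  fix p assume "p \<in> {subsum v D | D. n \<in> D}"
  then obtain D where "p = subsum v D" "n \<in> D" by blast
  then have "p = v n + subsum v (D - {n})"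
    using subsum_remove[OF sv] by (simp add: add.commute)
  then show "p \<in> (+) (v n) ` {subsum v D | D. n \<notin> D}" by blast
next
  fix p assume "p \<in> (+) (v n) ` {subsum v D | D. n \<notin> D}"
  then obtain D where "p = v n + subsum v D" "n \<notin> D" by blast
  then have "p = subsum v (insert n D)"
    using subsum_insert[OF sv] by (simp add: add.commute)
  then show "p \<in> {subsum v D | D. n \<in> D}" by blast
qed

lemma totally_disconnected_achievement_set:
  fixes v :: "nat \<Rightarrow> 'a::banach"
  assumes sv: "summable (\<lambda>n. norm (v n))" and inj: "inj (subsum v)"
  shows "totally_disconnected (achievement_set v)"
  unfolding totally_disconnected_def
proof (intro allI impI ballI)
  fix C a b assume C: "C \<subseteq> achievement_set v \<and> connected C" and "a \<in> C" "b \<in> C"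
  show "a = b"
  proof (rule ccontr)
    assume "a \<noteq> b"
    obtain A B where AB: "a = subsum v A" "b = subsum v B"
      using \<open>a \<in> C\<close> \<open>b \<in> C\<close> C unfolding achievement_set_def by blast
    with \<open>a \<noteq> b\<close> have "A \<noteq> B" by blast
    then obtain n where n: "(n \<in> A) \<noteq> (n \<in> B)" by blast
    define Ein Eout where
      "Ein = {subsum v D | D. n \<in> D}" and "Eout = {subsum v D | D. n \<notin> D}"
    have "compact Eout"
      unfolding Eout_def subsums_without_eq_achievement_set
      by (rule compact_achievement_set, rule summable_comparison_test[OF _ sv]) auto
    then have "compact Ein"
      unfolding Ein_def subsums_with_eq_translation[OF sv] Eout_def
      by (rule compact_translation)
    have "subsum v D \<noteq> subsum v D'" if "n \<in> D" "n \<notin> D'" for D D'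
      using injD[OF inj] that by blast
    then have "Ein \<inter> Eout = {}"
      unfolding Ein_def Eout_def by blast
    moreover have "C \<subseteq> Ein \<union> Eout"
      using C unfolding achievement_set_def Ein_def Eout_def by blast
    moreover have "a \<in> Ein \<and> b \<in> Eout \<or> a \<in> Eout \<and> b \<in> Ein"
      using n unfolding AB Ein_def Eout_def by blast
    ultimately have "\<exists>S T. closed S \<and> closed T \<and> C \<subseteq> S \<union> T \<and> S \<inter> T \<inter> C = {}
        \<and> S \<inter> C \<noteq> {} \<and> T \<inter> C \<noteq> {}"
      using \<open>compact Ein\<close> \<open>compact Eout\<close> \<open>a \<in> C\<close> \<open>b \<in> C\<close>
      by (intro exI[of _ Ein] exI[of _ Eout]) (auto simp: compact_imp_closed)
    with C show False
      unfolding connected_closed by blast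
  qed
qed

lemma cantor_set_achievement_set:
  fixes v :: "nat \<Rightarrow> 'a::banach"
  assumes sv: "summable (\<lambda>n. norm (v n))" and inj: "inj (subsum v)"
  shows "cantor_set (achievement_set v)"
proof -
  have "v k \<noteq> 0" for k
    using injD[OF inj, of "{k}" "{}"] subsum_insert[OF sv, of k "{}"] by auto
  then have "\<forall>p\<in>achievement_set v. p islimpt achievement_set v"
    using islimpt_achievement_set[OF sv] by blast
  moreover have "achievement_set v \<noteq> {}"
    unfolding achievement_set_def by blast
  ultimately show ?thesis
    unfolding cantor_set_def perfect_set_def
    using compact_achievement_set[OF sv] totally_disconnected_achievement_set[OF sv inj]
    by (simp add: compact_imp_closed)
qed

theorem corollary2p3:
  fixes x y :: "nat \<Rightarrow> real"
  assumes "summable (\<lambda>n. \<bar>x n\<bar>)" and "summable (\<lambda>n. \<bar>y n\<bar>)"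
    and "(\<forall>a\<in>achievement_set x. unique_representation x a)
         \<or> (\<forall>a\<in>achievement_set y. unique_representation y a)"
  shows "cantor_set (achievement_set (\<lambda>n. (x n, y n)))"
proof -
  let ?v = "\<lambda>n. (x n, y n)"
  have "norm (?v n) \<le> \<bar>x n\<bar> + \<bar>y n\<bar>" for n
    using norm_Pair_le[of "x n" "y n"] by simp
  then have sv: "summable (\<lambda>n. norm (?v n))"
    by (intro summable_comparison_test[OF _ summable_add[OF assms(1,2)]]) auto
  have "inj (subsum x) \<or> inj (subsum y)"
    using assms(3) by (simp add: inj_subsum_iff_unique_representation)
  then have "inj (subsum ?v)"
    using inj_subsum_if_inj_subsum_image[OF bounded_linear_fst sv]
      inj_subsum_if_inj_subsum_image[OF bounded_linear_snd sv] by auto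
  then show ?thesis
    by (rule cantor_set_achievement_set[OF sv])
qed

end
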